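(* Suppose $EAE(V)<\infty$. Then the condition "$\mathbb{E}[V(yZ_T^0)]<\infty$ for all $y>0$" holds if and only if $u(x,U)<\infty$ for some $x>0$.
   Context: Fix $T>0$ and a filtered probability space $(\Omega,\mathcal F,(\mathcal F_t)_{0\le t\le T},\mathbf P)$ satisfying the usual conditions. Fix $0<\lambda<1$ and a strictly positive càdlàg adapted stock price $S$. A $\lambda$-consistent price system is a strictly positive process $Z=(Z^0,Z^1)$ with $Z^0_0=1$, $Z^0$ a $\mathbf P$-martingale, $Z^1$ a $\mathbf P$-local martingale, and $Z^1_t/Z^0_t\in[(1-\lambda)S_t,S_t]$ a.s. for all $t$. Standing assumption: one such $Z$ is fixed. Following the paper, $\mathcal C(x)=\{f\in L^0_+(\mathbf P):\mathbb{E}[Z_T^0 f]\le x\}$ for $x>0$. A utility is a function $U:(0,\infty)\to\mathbb R$ that is non-constant, increasing, upper semicontinuous, with $U(\infty):=\lim_{x\to\infty}U(x)>0$ and $\lim_{x\to\infty}U(x)/x=0$; $U$ need not be concave. Set $U(0):=\lim_{x\downarrow0}U(x)$. For $f\ge0$, $\mathbb{E}[U(f)]:=-\infty$ if $U^-(f)\notin L^1$. The value function is $u(x,U):=\sup\{\mathbb{E}[U(f)]:f\in\mathcal C(x)\}$. The convex conjugate is $V(y):=\sup_{x>0}\{U(x)-xy\}$ (a convex, decreasing function finite on $(0,\infty)$), $\partial V(y)$ denotes its subdifferential at $y$, and the extended asymptotic elasticity is $EAE(V):=\limsup_{y\to0}\sup_{q\in\partial V(y)}\frac{|q|\,y}{V(y)}$.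 *)

theory Defs
  imports "HOL-Probability.Probability"
begin

definition is_utility :: "(real \<Rightarrow> real) \<Rightarrow> bool" where
  "is_utility U \<longleftrightarrow>
     (\<exists>a>0. \<exists>b>0. U a \<noteq> U b) \<and>
     mono_on {0<..} U \<and>
     (\<forall>x>0. \<forall>c. U x < c \<longrightarrow> (\<forall>\<^sub>F z in at x within {0<..}. U z < c)) \<and>
     (\<exists>L::ereal. ((\<lambda>x. ereal (U x)) \<longlongrightarrow> L) at_top \<and> L > 0) \<and>
     ((\<lambda>x. U x / x) \<longlongrightarrow> 0) at_top"

definition Uext :: "(real \<Rightarrow> real) \<Rightarrow> real \<Rightarrow> ereal" where
  "Uext U x = (if x > 0 then ereal (U x) else Lim (at_right 0) (\<lambda>z. ereal (U z)))"

definition expected_utility :: "'a measure \<Rightarrow> (real \<Rightarrow> real) \<Rightarrow> ('a \<Rightarrow> real) \<Rightarrow> ereal" where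
  "expected_utility M U f =
     (let P = (\<integral>\<^sup>+ w. e2ennreal (max 0 (Uext U (f w))) \<partial>M);
          N = (\<integral>\<^sup>+ w. e2ennreal (max 0 (- Uext U (f w))) \<partial>M)
      in if N = \<infinity> then -\<infinity> else enn2ereal P - enn2ereal N)"

definition budget_set :: "'a measure \<Rightarrow> ('a \<Rightarrow> real) \<Rightarrow> real \<Rightarrow> ('a \<Rightarrow> real) set" where
  "budget_set M ZT x = {f. f \<in> borel_measurable M \<and> (\<forall>w\<in>space M. 0 \<le> f w) \<and>
       (\<integral>\<^sup>+ w. ennreal (ZT w * f w) \<partial>M) \<le> ennreal x}"

definition value_fun :: "'a measure \<Rightarrow> ('a \<Rightarrow> real) \<Rightarrow> real \<Rightarrow> (real \<Rightarrow> real) \<Rightarrow> ereal" where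
  "value_fun M ZT x U = (SUP f\<in>budget_set M ZT x. expected_utility M U f)"

definition conj_V :: "(real \<Rightarrow> real) \<Rightarrow> real \<Rightarrow> real" where
  "conj_V U y = (SUP x\<in>{0<..}. U x - x * y)"

definition subdiff_V :: "(real \<Rightarrow> real) \<Rightarrow> real \<Rightarrow> real set" where
  "subdiff_V U y = {q. \<forall>z>0. conj_V U y + q * (z - y) \<le> conj_V U z}"

definition EAE :: "(real \<Rightarrow> real) \<Rightarrow> ereal" where
  "EAE U = Limsup (at_right 0)
     (\<lambda>y. SUP q\<in>subdiff_V U y. ereal (\<bar>q\<bar> * y / conj_V U y))"

end

theory Submission
  imports Defs
begin

text \<open>
  If \<open>E[V(Z)] < \<infinity>\<close>, Fenchel's inequality \<open>U(f) \<le> V(Z) + Z f\<close> bounds the expected utility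
  of every claim in \<open>C(1)\<close>. Conversely, let \<open>E[V(y\<^sub>0 Z)] = \<infinity>\<close>; for bounded \<open>U\<close> this is
  impossible, so \<open>U\<close> is unbounded. Then \<open>EAE(V) < \<infinity>\<close> gives \<open>|q| y \<le> C V(y)\<close> for
  subgradients near \<open>0\<close>, hence the doubling bound \<open>V(y / (1 + 1/(2C))) \<le> 2 V(y)\<close>, so
  \<open>E[V(y Z)] = \<infinity>\<close> for all \<open>y \<ge> y\<^sub>0\<close>. Applied to the minimizer of \<open>\<eta> \<mapsto> V(\<eta>) + \<eta> f\<close>, the
  same bound shows that \<open>U\<close> is concave up to the factor \<open>1 + C\<close>:
  \<open>t U(g) \<le> (1 + C) (U(c + t g) + K)\<close>. Now take measurable near-maximizers \<open>g\<close> of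
  \<open>U(g) - y Z g\<close>, restrict them to a set on which \<open>V(y Z)\<close> has large finite integral, and
  spend half of the budget \<open>x\<close> on the constant \<open>c\<close> and half on \<open>t g\<close>: this yields claims
  in \<open>C(x)\<close> of arbitrarily large expected utility, so \<open>u(x) = \<infinity>\<close> for every \<open>x > 0\<close>.
\<close>

lemma powr_floor_log_le:
  fixes v :: real assumes "v > 0"
  shows "2 powr real_of_int \<lfloor>log 2 v\<rfloor> \<le> v"
proof -
  have "2 powr real_of_int \<lfloor>log 2 v\<rfloor> \<le> 2 powr (log 2 v)"
    by (intro powr_mono) auto
  then show ?thesis using assms by simp
qed

lemma less_two_mult_powr_floor_log:
  fixes v :: real assumes "v > 0"
  shows "v < 2 * 2 powr real_of_int \<lfloor>log 2 v\<rfloor>"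
proof -
  have "v = 2 powr (log 2 v)" using assms by simp
  also have "\<dots> < 2 powr (real_of_int \<lfloor>log 2 v\<rfloor> + 1)"
    by (intro powr_less_mono) linarith+
  also have "\<dots> = 2 * 2 powr real_of_int \<lfloor>log 2 v\<rfloor>" by (simp add: powr_add)
  finally show ?thesis .
qed

lemma ennreal_add_le: "ennreal (a + b) \<le> ennreal a + ennreal (b :: real)"
proof (cases "a \<ge> 0 \<and> b \<ge> 0")
  case True then show ?thesis by simp
next
  case False
  then have "ennreal (a + b) \<le> ennreal b \<or> ennreal (a + b) \<le> ennreal a"
    by (auto intro: ennreal_leI)
  then show ?thesis by (meson add_increasing add_increasing2 order_trans zero_le)
qed

lemma e2ennreal_max_0_ereal [simp]: "e2ennreal (max 0 (ereal r)) = ennreal r"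
  by (cases "r \<ge> 0") (auto simp: max_def ennreal_neg zero_ereal_def)

lemma expected_utility_le_nn_integral:
  assumes "\<And>w. w \<in> space M \<Longrightarrow> Uext U (f w) \<le> ereal (\<phi> w)"
  shows "expected_utility M U f \<le> enn2ereal (\<integral>\<^sup>+ w. ennreal (\<phi> w) \<partial>M)"
proof -
  define P where "P = (\<integral>\<^sup>+ w. e2ennreal (max 0 (Uext U (f w))) \<partial>M)"
  define N where "N = (\<integral>\<^sup>+ w. e2ennreal (max 0 (- Uext U (f w))) \<partial>M)"
  have "P \<le> (\<integral>\<^sup>+ w. ennreal (\<phi> w) \<partial>M)"
    unfolding P_def
  proof (rule nn_integral_mono)
    fix w assume "w \<in> space M"
    then have "e2ennreal (max 0 (Uext U (f w))) \<le> e2ennreal (max 0 (ereal (\<phi> w)))"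
      using assms by (intro e2ennreal_mono max.mono) auto
    then show "e2ennreal (max 0 (Uext U (f w))) \<le> ennreal (\<phi> w)" by simp
  qed
  then have "enn2ereal P \<le> enn2ereal (\<integral>\<^sup>+ w. ennreal (\<phi> w) \<partial>M)"
    by (simp add: less_eq_ennreal.rep_eq)
  moreover have "expected_utility M U f \<le> enn2ereal P"
  proof (cases "N = \<infinity>")
    case False
    then have "expected_utility M U f = enn2ereal P - enn2ereal N"
      by (simp add: expected_utility_def P_def N_def Let_def)
    then show ?thesis using False by (cases "enn2ereal P") (auto simp: ereal_diff_le_self)
  qed (simp add: expected_utility_def N_def)
  ultimately show ?thesis by (rule order_trans[rotated])
qed

lemma expected_utility_ge_integral:
  assumes "prob_space M" "integrable M \<psi>" "D \<ge> 0"
    and "\<And>w. w \<in> space M \<Longrightarrow> Uext U (f w) = ereal (h w)"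
    and "h \<in> borel_measurable M"
    and "\<And>w. w \<in> space M \<Longrightarrow> 0 \<le> \<psi> w"
    and "\<And>w. w \<in> space M \<Longrightarrow> \<psi> w \<le> h w + D"
  shows "ereal ((\<integral>w. \<psi> w \<partial>M) - 2 * D) \<le> expected_utility M U f"
proof -
  interpret prob_space M by fact
  define P where "P = (\<integral>\<^sup>+ w. ennreal (h w) \<partial>M)"
  define N where "N = (\<integral>\<^sup>+ w. ennreal (- h w) \<partial>M)"
  have "N \<le> (\<integral>\<^sup>+ w. ennreal D \<partial>M)"
    unfolding N_def using assms(6,7) by (intro nn_integral_mono ennreal_leI) fastforce
  then have N_le: "enn2ereal N \<le> ereal D"
    using \<open>D \<ge> 0\<close> by (simp add: emeasure_space_1 less_eq_ennreal.rep_eq)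
  have "ennreal (\<integral>w. \<psi> w \<partial>M) = (\<integral>\<^sup>+ w. ennreal (\<psi> w) \<partial>M)"
    using assms(2,6) by (intro nn_integral_eq_integral[symmetric] AE_I2) auto
  also have "\<dots> \<le> (\<integral>\<^sup>+ w. ennreal (h w) + ennreal D \<partial>M)"
    using assms(7) by (intro nn_integral_mono order_trans[OF ennreal_leI ennreal_add_le]) auto
  also have "\<dots> = P + ennreal D"
    unfolding P_def using assms(5) by (subst nn_integral_add) (auto simp: emeasure_space_1)
  finally have "enn2ereal (ennreal (\<integral>w. \<psi> w \<partial>M)) \<le> enn2ereal (P + ennreal D)"
    by (simp add: less_eq_ennreal.rep_eq)
  moreover have "(\<integral>w. \<psi> w \<partial>M) \<ge> 0" using assms(6) by (intro integral_nonneg_AE AE_I2) auto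
  ultimately have P_ge: "ereal (\<integral>w. \<psi> w \<partial>M) \<le> enn2ereal P + ereal D"
    using \<open>D \<ge> 0\<close> by (simp add: plus_ennreal.rep_eq)
  have "(\<integral>\<^sup>+ w. e2ennreal (max 0 (Uext U (f w))) \<partial>M) = P"
    "(\<integral>\<^sup>+ w. e2ennreal (max 0 (- Uext U (f w))) \<partial>M) = N"
    unfolding P_def N_def by (auto intro!: nn_integral_cong simp: assms(4) simp del: ereal_uminus_zero)
  moreover have "N \<noteq> \<infinity>" using N_le by auto
  ultimately have "expected_utility M U f = enn2ereal P - enn2ereal N"
    by (simp add: expected_utility_def Let_def)
  moreover obtain q where "enn2ereal N = ereal q" "q \<le> D"
    using N_le enn2ereal_nonneg[of N] by (cases "enn2ereal N") auto
  ultimately show ?thesis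
    using P_ge enn2ereal_nonneg[of P] by (cases "enn2ereal P") auto
qed

lemma nn_integral_truncation_unbounded:
  fixes W G :: "'a \<Rightarrow> real"
  assumes "W \<in> borel_measurable M" "G \<in> borel_measurable M" "(\<integral>\<^sup>+ w. ennreal (W w) \<partial>M) = \<infinity>"
  shows "\<exists>A\<in>sets M. \<exists>b. (\<forall>w\<in>A. 0 \<le> W w \<and> W w \<le> b \<and> G w \<le> b) \<and>
           ennreal R < (\<integral>\<^sup>+ w. ennreal (W w * indicator A w) \<partial>M)"
proof -
  define A where "A n = {w\<in>space M. 0 \<le> W w \<and> W w \<le> real n \<and> G w \<le> real n}" for n :: nat
  define F where "F n w = ennreal (W w * indicator (A n) w)" for n w
  have A_sets: "A n \<in> sets M" for n unfolding A_def using assms by measurable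
  have "incseq F"
    by (intro incseq_SucI le_funI) (auto simp: F_def A_def indicator_def intro!: ennreal_leI)
  moreover have F_meas: "F n \<in> borel_measurable M" for n
    unfolding F_def using assms A_sets by measurable
  ultimately have "(SUP n. integral\<^sup>N M (F n)) = (\<integral>\<^sup>+ w. (SUP n. F n w) \<partial>M)"
    by (rule nn_integral_monotone_convergence_SUP[symmetric])
  also have "\<dots> = (\<integral>\<^sup>+ w. ennreal (W w) \<partial>M)"
  proof (rule nn_integral_cong)
    fix w assume w: "w \<in> space M"
    have le: "F n w \<le> ennreal (W w)" for n
      by (auto simp: F_def A_def indicator_def intro: ennreal_leI)
    show "(SUP n. F n w) = ennreal (W w)"
    proof (cases "W w \<ge> 0")
      case True
      define n where "n = nat \<lceil>max (W w) (G w)\<rceil>"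
      have "w \<in> A n" using w True by (auto simp: A_def n_def) linarith+
      then have "F n w = ennreal (W w)" by (simp add: F_def)
      then show ?thesis using le by (metis SUP_upper UNIV_I SUP_least antisym)
    qed (use le in \<open>auto simp: ennreal_neg intro: antisym\<close>)
  qed
  finally obtain n where "ennreal R < integral\<^sup>N M (F n)"
    using assms(3) by (metis ennreal_less_top infinity_ennreal_def less_SUP_iff)
  then show ?thesis
    unfolding F_def using A_sets by (intro bexI[of _ "A n"] exI[of _ "real n"]) (auto simp: A_def)
qed

lemma exists_mixing_weight:
  fixes x P S B y :: real
  assumes "x > 0" "0 \<le> P" "P < S" "0 \<le> B" "4 * P / x \<le> y"
  shows "\<exists>t. 0 \<le> t \<and> t \<le> 1 \<and> t * B \<le> x / 2 \<and> P \<le> t * (S + y * B / 2)"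
proof (cases "B \<le> x / 2")
  case True
  have "0 \<le> y" using assms by (meson divide_nonneg_pos mult_nonneg_nonneg order_trans zero_le_numeral)
  then have "0 \<le> y * B / 2" using assms by simp
  then show ?thesis using True assms by (intro exI[of _ 1]) auto
next
  case False
  define t where "t = x / 2 / B"
  have "P \<le> t * (y * B / 2)" using False assms by (simp add: t_def field_simps)
  moreover have "0 \<le> t * S" using False assms by (simp add: t_def)
  ultimately have "P \<le> t * (S + y * B / 2)" unfolding distrib_left by linarith
  moreover have "0 \<le> t" "t \<le> 1" "t * B = x / 2" using False assms by (auto simp: t_def)
  ultimately show ?thesis by auto
qed

lemma budget_set_mixture:
  assumes M: "prob_space M" and Z: "Z \<in> borel_measurable M" "\<forall>w\<in>space M. 0 < Z w"
    "integrable M Z" "(\<integral>w. Z w \<partial>M) = 1"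
    and "0 \<le> c" "0 \<le> t" "g \<in> borel_measurable M" "\<forall>w\<in>space M. 0 \<le> g w" "A \<in> sets M"
    and G: "integrable M (\<lambda>w. Z w * g w * indicator A w)"
    and budget: "c + t * (\<integral>w. Z w * g w * indicator A w \<partial>M) \<le> x"
  shows "(\<lambda>w. c + t * (g w * indicator A w)) \<in> budget_set M Z x"
proof -
  interpret prob_space M by (rule M)
  define f where "f = (\<lambda>w. c + t * (g w * indicator A w))"
  have Zf: "Z w * f w = c * Z w + t * (Z w * g w * indicator A w)" for w
    by (simp add: f_def algebra_simps)
  have "integrable M (\<lambda>w. Z w * f w)" unfolding Zf using Z G by auto
  moreover have "(\<integral>w. Z w * f w \<partial>M) \<le> x" unfolding Zf using Z G budget by simp
  moreover have f_nonneg: "0 \<le> f w" if "w \<in> space M" for w using assms that by (simp add: f_def)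
  then have "AE w in M. 0 \<le> Z w * f w" using Z(2) by (intro AE_I2) (simp add: less_imp_le)
  ultimately have "(\<integral>\<^sup>+ w. ennreal (Z w * f w) \<partial>M) \<le> ennreal x"
    by (subst nn_integral_eq_integral) (auto intro: ennreal_leI)
  moreover have "f \<in> borel_measurable M" unfolding f_def using assms by measurable
  ultimately show ?thesis using f_nonneg by (simp add: budget_set_def f_def)
qed

locale sublinear_utility =
  fixes U :: "real \<Rightarrow> real"
  assumes mono: "mono_on {0<..} U"
    and upper_semicontinuous: "\<forall>x>0. \<forall>c. U x < c \<longrightarrow> (\<forall>\<^sub>F z in at x within {0<..}. U z < c)"
    and sublinear: "((\<lambda>x. U x / x) \<longlongrightarrow> 0) at_top"
begin

abbreviation V where "V \<equiv> conj_V U"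

lemma U_mono: "0 < x \<Longrightarrow> x \<le> y \<Longrightarrow> U x \<le> U y"
  using mono by (auto simp: mono_on_def)

lemma linear_majorant:
  assumes "e > 0" shows "\<exists>K. \<forall>x>0. U x \<le> e * x + K"
proof -
  obtain N where N: "\<And>x. x \<ge> N \<Longrightarrow> U x / x < e"
    using order_tendstoD(2)[OF sublinear assms] by (auto simp: eventually_at_top_linorder)
  define N' where "N' = max N 1"
  have "U x \<le> e * x + \<bar>U N'\<bar>" if "x > 0" for x
  proof (cases "x \<ge> N'")
    case True
    then have "U x < e * x" using N[of x] N'_def by (simp add: divide_less_eq mult.commute)
    then show ?thesis by simp
  next
    case False
    then have "U x \<le> U N'" using U_mono[OF that] by simp
    moreover have "e * x \<ge> 0" using assms that by simp
    ultimately show ?thesis by linarith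
  qed
  then show ?thesis by blast
qed

lemma bdd_above_conj: "\<eta> > 0 \<Longrightarrow> bdd_above ((\<lambda>x. U x - x * \<eta>) ` {0<..})"
  using linear_majorant[of \<eta>] by (fastforce simp: algebra_simps)

lemma fenchel: "\<eta> > 0 \<Longrightarrow> x > 0 \<Longrightarrow> U x - x * \<eta> \<le> V \<eta>"
  unfolding conj_V_def by (rule cSUP_upper[OF _ bdd_above_conj]) auto

lemma U_le_conj: "\<eta> > 0 \<Longrightarrow> x > 0 \<Longrightarrow> U x \<le> V \<eta> + \<eta> * x"
  using fenchel[of \<eta> x] by (simp add: algebra_simps)

lemma conj_le: "\<eta> > 0 \<Longrightarrow> (\<And>x. x > 0 \<Longrightarrow> U x - x * \<eta> \<le> B) \<Longrightarrow> V \<eta> \<le> B"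
  unfolding conj_V_def by (rule cSUP_least) auto

lemma conj_approx: "\<eta> > 0 \<Longrightarrow> e > 0 \<Longrightarrow> \<exists>x>0. V \<eta> - e < U x - x * \<eta>"
  using conj_le[of \<eta> "V \<eta> - e"] by force

lemma conj_antimono:
  assumes "0 < a" "a \<le> b" shows "V b \<le> V a"
proof (rule conj_le)
  fix x :: real assume "x > 0"
  then have "U x - x * b \<le> U x - x * a" using assms by (simp add: mult_left_mono)
  also have "\<dots> \<le> V a" using fenchel assms \<open>x > 0\<close> by simp
  finally show "U x - x * b \<le> V a" .
qed (use assms in simp)

lemma conj_le_of_bdd_above:
  assumes "\<eta> > 0" "\<And>x. x > 0 \<Longrightarrow> U x \<le> B" shows "V \<eta> \<le> B"
proof (rule conj_le[OF assms(1)])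
  fix x :: real assume "x > 0"
  then show "U x - x * \<eta> \<le> B" using assms by (smt (verit) mult_pos_pos)
qed

lemma convex_on_conj: "convex_on {0<..} V"
proof (rule convex_onI)
  fix t x y :: real assume t: "0 < t" "t < 1" and xy: "x \<in> {0<..}" "y \<in> {0<..}"
  have pos: "(1 - t) *\<^sub>R x + t *\<^sub>R y > 0" using t xy by (simp add: add_pos_pos)
  show "V ((1 - t) *\<^sub>R x + t *\<^sub>R y) \<le> (1 - t) * V x + t * V y"
  proof (rule conj_le[OF pos])
    fix u :: real assume u: "u > 0"
    have "U u - u * ((1 - t) *\<^sub>R x + t *\<^sub>R y) = (1 - t) * (U u - u * x) + t * (U u - u * y)"
      by (simp add: algebra_simps)
    also have "\<dots> \<le> (1 - t) * V x + t * V y"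
      using t xy u by (intro add_mono mult_left_mono fenchel) auto
    finally show "U u - u * ((1 - t) *\<^sub>R x + t *\<^sub>R y) \<le> (1 - t) * V x + t * V y" .
  qed
qed simp

lemma continuous_on_conj: "continuous_on {0<..} V"
  by (rule convex_on_continuous[OF _ convex_on_conj]) simp

lemma borel_measurable_conj:
  assumes "Y \<in> borel_measurable M" "\<And>w. w \<in> space M \<Longrightarrow> Y w > 0"
  shows "(\<lambda>w. V (Y w)) \<in> borel_measurable M"
proof -
  have "(\<lambda>\<eta>. if \<eta> \<in> {0<..} then V \<eta> else 0) \<in> borel_measurable borel"
    by (intro borel_measurable_continuous_on_if continuous_on_conj) auto
  from measurable_compose[OF assms(1) this]
  show ?thesis by (rule measurable_cong[THEN iffD1, rotated]) (use assms(2) in auto)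
qed

lemma conj_subgradient_exists:
  assumes "a > 0" shows "\<exists>q. q \<in> subdiff_V U a"
proof -
  define S where "S = (\<lambda>z. (V a - V z) / (a - z)) ` {0<..<a}"
  have slope: "(V a - V z) / (a - z) \<le> (V w - V a) / (w - a)" if "0 < z" "z < a" "a < w" for z w
    using convex_on_slope_le[OF convex_on_conj, of z w a] that
    by (auto simp: field_simps)
  have "bdd_above S" unfolding S_def
    by (rule bdd_aboveI[of _ "(V (a+1) - V a) / ((a+1) - a)"]) (use slope[of _ "a+1"] in auto)
  have "V a + Sup S * (z - a) \<le> V z" if z: "z > 0" for z
  proof (cases z a rule: linorder_cases)
    case less
    have "(V a - V z) / (a - z) \<le> Sup S"
      by (rule cSup_upper[OF _ \<open>bdd_above S\<close>]) (use less z in \<open>auto simp: S_def\<close>)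
    then show ?thesis using less by (simp add: divide_le_eq algebra_simps)
  next
    case greater
    have "Sup S \<le> (V z - V a) / (z - a)"
      by (rule cSup_least) (use slope greater assms in \<open>auto simp: S_def\<close>)
    then show ?thesis using greater by (simp add: le_divide_eq algebra_simps)
  qed simp
  then show ?thesis by (auto simp: subdiff_V_def)
qed

lemma Uext_nonpos:
  assumes "x \<le> 0" shows "Uext U x = (INF z\<in>{0<..}. ereal (U z))"
proof -
  define L where "L = (INF z\<in>{0<..}. ereal (U z))"
  have "((\<lambda>z. ereal (U z)) \<longlongrightarrow> L) (at_right 0)"
  proof (rule order_tendstoI)
    fix a assume "a < L"
    then have "\<forall>z>0. a < ereal (U z)"
      unfolding L_def by (meson INF_lower greaterThan_iff less_le_trans)
    then show "\<forall>\<^sub>F z in at_right 0. a < ereal (U z)"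
      unfolding eventually_at_right_field by (intro exI[of _ 1]) auto
  next
    fix a assume "L < a"
    then obtain z0 where z0: "z0 > 0" "ereal (U z0) < a" unfolding L_def by (auto simp: INF_less_iff)
    then have "\<forall>z>0. z < z0 \<longrightarrow> ereal (U z) < a"
      by (meson U_mono ereal_less_eq(3) le_less_trans less_imp_le)
    then show "\<forall>\<^sub>F z in at_right 0. ereal (U z) < a"
      unfolding eventually_at_right_field using z0 by blast
  qed
  then have "Lim (at_right 0) (\<lambda>z. ereal (U z)) = L" by (rule tendsto_Lim[rotated]) simp
  then show ?thesis using assms by (simp add: Uext_def L_def)
qed

lemma Uext_le_conj:
  assumes "x \<ge> 0" "\<eta> > 0" shows "Uext U x \<le> ereal (V \<eta> + \<eta> * x)"
proof (cases "x > 0")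
  case True then show ?thesis using U_le_conj[OF assms(2) True] by (simp add: Uext_def)
next
  case False
  then have x0: "x = 0" using assms by simp
  have "Uext U x \<le> ereal (V \<eta>) + ereal h" if "h > 0" for h
  proof -
    have "Uext U x \<le> ereal (U (h / \<eta>))"
      unfolding Uext_nonpos[OF eq_refl[OF x0]] using that assms by (intro INF_lower) simp
    also have "\<dots> \<le> ereal (V \<eta> + h)"
      using U_le_conj[of \<eta> "h / \<eta>"] that assms by simp
    finally show ?thesis by simp
  qed
  then have "Uext U x \<le> ereal (V \<eta>)" by (rule ereal_le_epsilon2)
  then show ?thesis using x0 by simp
qed

lemma value_fun_finite:
  assumes "ZT \<in> borel_measurable M" "\<forall>w\<in>space M. 0 < ZT w"
    and "(\<integral>\<^sup>+ w. ennreal (V (ZT w)) \<partial>M) < \<infinity>"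
  shows "value_fun M ZT 1 U < \<infinity>"
proof -
  define Q where "Q = (\<integral>\<^sup>+ w. ennreal (V (ZT w)) \<partial>M)"
  have "expected_utility M U f \<le> enn2ereal (Q + 1)" if "f \<in> budget_set M ZT 1" for f
  proof -
    have f: "f \<in> borel_measurable M" "\<And>w. w \<in> space M \<Longrightarrow> 0 \<le> f w"
      "(\<integral>\<^sup>+ w. ennreal (ZT w * f w) \<partial>M) \<le> 1"
      using that by (auto simp: budget_set_def)
    have "expected_utility M U f \<le> enn2ereal (\<integral>\<^sup>+ w. ennreal (V (ZT w) + ZT w * f w) \<partial>M)"
      using Uext_le_conj f(2) assms(2) by (intro expected_utility_le_nn_integral) auto
    also have "(\<integral>\<^sup>+ w. ennreal (V (ZT w) + ZT w * f w) \<partial>M)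
        \<le> (\<integral>\<^sup>+ w. ennreal (V (ZT w)) + ennreal (ZT w * f w) \<partial>M)"
      by (intro nn_integral_mono ennreal_add_le)
    also have "\<dots> = Q + (\<integral>\<^sup>+ w. ennreal (ZT w * f w) \<partial>M)"
      unfolding Q_def using borel_measurable_conj[of ZT M] assms f by (subst nn_integral_add) auto
    also have "\<dots> \<le> Q + 1" using f(3) by (simp add: add_left_mono)
    finally show ?thesis by (simp add: less_eq_ennreal.rep_eq)
  qed
  then have "value_fun M ZT 1 U \<le> enn2ereal (Q + 1)" unfolding value_fun_def by (rule SUP_least)
  also have "\<dots> < \<infinity>" using assms(3) unfolding Q_def by (simp add: less_top[symmetric])
  finally show ?thesis .
qed

lemma conj_le_U_of_subgradient:
  assumes "f > 0" "e > 0" "- f \<in> subdiff_V U e"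
  shows "V e \<le> U f"
proof (rule ccontr)
  have min: "V e + e * f \<le> V z + z * f" if "z > 0" for z
    using assms(3) that by (auto simp: subdiff_V_def algebra_simps)
  assume "\<not> V e \<le> U f"
  then have "\<forall>\<^sub>F z in at f within {0<..}. U z < V e"
    using upper_semicontinuous assms(1) by auto
  then obtain d where d: "d > 0" "\<And>z. z \<in> {0<..} \<Longrightarrow> z \<noteq> f \<Longrightarrow> dist z f < d \<Longrightarrow> U z < V e"
    unfolding eventually_at by blast
  define \<delta> where "\<delta> = d / 2"
  have \<delta>: "\<delta> > 0" "\<delta> < d" using d by (auto simp: \<delta>_def)
  have bound: "V e \<le> U (f + \<delta>) + h * (f + \<delta>)" if h: "h > 0" for h
  proof -
    \<comment> \<open>an almost-maximizer for the slope \<open>e + h\<close> cannot lie beyond \<open>f + \<delta>\<close>\<close>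
    obtain x where x: "x > 0" "V (e + h) - h * \<delta> < U x - x * (e + h)"
      using conj_approx[of "e + h" "h * \<delta>"] h \<delta> assms by auto
    have "V e - h * f \<le> V (e + h)" using min[of "e + h"] h assms by (simp add: algebra_simps)
    moreover have "U x - x * e \<le> V e" using fenchel assms x by simp
    ultimately have "x * h < (f + \<delta>) * h" using x by (simp add: algebra_simps)
    then have "U x \<le> U (f + \<delta>)" using h x by (intro U_mono) auto
    moreover have "V e - h * f - h * \<delta> + x * (e + h) < U x"
      using x \<open>V e - h * f \<le> V (e + h)\<close> by simp
    moreover have "x * (e + h) \<ge> 0" using x h assms by simp
    ultimately show ?thesis by (simp add: algebra_simps)
  qed
  have "V e \<le> U (f + \<delta>) + \<epsilon>" if "\<epsilon> > 0" for \<epsilon>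
    using bound[of "\<epsilon> / (f + \<delta>)"] that assms(1) \<delta> by simp
  then have "V e \<le> U (f + \<delta>)" by (rule field_le_epsilon)
  moreover have "U (f + \<delta>) < V e" using d(2)[of "f + \<delta>"] \<delta> assms by (auto simp: dist_real_def)
  ultimately show False by simp
qed

lemma borel_measurable_U_comp:
  assumes "f \<in> borel_measurable M" "c > 0" "\<And>w. w \<in> space M \<Longrightarrow> c \<le> f w"
  shows "(\<lambda>w. U (f w)) \<in> borel_measurable M"
proof -
  have "mono (\<lambda>v. U (max v c))" by (rule monoI) (use assms(2) in \<open>auto intro: U_mono\<close>)
  then have "(\<lambda>v. U (max v c)) \<in> borel_measurable borel" by (rule borel_measurable_mono)
  from measurable_compose[OF assms(1) this] show ?thesis
    by (rule measurable_cong[THEN iffD1, rotated]) (simp add: assms(3))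
qed

lemma nn_integral_conj_finite_of_bdd_above:
  assumes "prob_space M" "bdd_above (U ` {0<..})" "\<And>w. w \<in> space M \<Longrightarrow> 0 < Y w"
  shows "(\<integral>\<^sup>+ w. ennreal (V (Y w)) \<partial>M) < \<infinity>"
proof -
  interpret prob_space M by fact
  obtain B where B: "\<And>x. x > 0 \<Longrightarrow> U x \<le> B" using assms(2) by (auto simp: bdd_above_def)
  have "(\<integral>\<^sup>+ w. ennreal (V (Y w)) \<partial>M) \<le> (\<integral>\<^sup>+ w. ennreal B \<partial>M)"
    using conj_le_of_bdd_above[OF assms(3) B] by (intro nn_integral_mono ennreal_leI)
  also have "\<dots> = ennreal B" by (simp add: emeasure_space_1)
  finally show ?thesis
    unfolding infinity_ennreal_def using ennreal_less_top by (rule order.strict_trans1)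
qed

lemma exists_measurable_near_maximizer:
  assumes "Y \<in> borel_measurable M" "\<And>w. w \<in> space M \<Longrightarrow> 0 < Y w"
  shows "\<exists>g\<in>borel_measurable M. \<forall>w\<in>space M. 0 < g w \<and> V (Y w) - 1 + Y w * g w / 2 \<le> U (g w)"
proof -
  \<comment> \<open>choosing near-maximizers only for the countably many slopes \<open>2 powr j\<close> keeps \<open>g\<close>
    measurable; rounding \<open>Y w\<close> down to such a slope costs the factor \<open>1/2\<close>\<close>
  define G where "G = (\<lambda>j::int. SOME g. g > 0 \<and> V (2 powr j) - 1 < U g - g * 2 powr j)"
  have G: "G j > 0 \<and> V (2 powr j) - 1 < U (G j) - G j * 2 powr j" for j
    unfolding G_def by (rule someI_ex) (use conj_approx[of "2 powr j" 1] in auto)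
  define k where "k = (\<lambda>w. \<lfloor>log 2 (Y w)\<rfloor>)"
  have k: "k \<in> measurable M (count_space UNIV)"
    unfolding k_def
    by (rule measurable_compose[OF borel_measurable_log[OF assms(1) borel_measurable_const]
          measurable_real_floor])
  have "(\<lambda>w. G (k w)) \<in> borel_measurable M"
    by (rule measurable_compose_countable[OF _ k]) simp
  moreover have "V (Y w) - 1 + Y w * G (k w) / 2 \<le> U (G (k w))" if w: "w \<in> space M" for w
  proof -
    define E where "E = 2 powr k w"
    have E: "E > 0" "E \<le> Y w" "Y w < 2 * E"
      using powr_floor_log_le[OF assms(2)[OF w]] less_two_mult_powr_floor_log[OF assms(2)[OF w]]
      by (simp_all add: E_def k_def)
    have "V (Y w) \<le> V E" using E by (intro conj_antimono) auto
    moreover have "Y w * G (k w) \<le> 2 * (G (k w) * E)"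
      using mult_right_mono[OF less_imp_le[OF E(3)], of "G (k w)"] G[of "k w"] by (simp add: mult_ac)
    moreover have "V E - 1 < U (G (k w)) - G (k w) * E" using G[of "k w"] by (simp add: E_def)
    ultimately show ?thesis by linarith
  qed
  ultimately show ?thesis using G by (intro bexI[of _ "\<lambda>w. G (k w)"]) auto
qed

lemma exists_truncated_near_maximizer:
  assumes M: "prob_space M" and Z: "Z \<in> borel_measurable M" "\<forall>w\<in>space M. 0 < Z w"
    and "y > 0" "(\<integral>\<^sup>+ w. ennreal (V (y * Z w)) \<partial>M) = \<infinity>"
  obtains g A where "g \<in> borel_measurable M" "A \<in> sets M"
    "\<And>w. w \<in> space M \<Longrightarrow> 0 < g w \<and> V (y * Z w) - 1 + y * Z w * g w / 2 \<le> U (g w)"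
    "\<And>w. 0 \<le> (V (y * Z w) - 1) * indicator A w"
    "integrable M (\<lambda>w. (V (y * Z w) - 1) * indicator A w)"
    "integrable M (\<lambda>w. Z w * g w * indicator A w)"
    "P < (\<integral>w. (V (y * Z w) - 1) * indicator A w \<partial>M)"
proof -
  interpret prob_space M by (rule M)
  define W where "W w = V (y * Z w) - 1" for w
  have W_meas[measurable]: "W \<in> borel_measurable M"
    unfolding W_def using borel_measurable_conj[of "\<lambda>w. y * Z w" M] Z \<open>y > 0\<close> by simp
  have "\<infinity> = (\<integral>\<^sup>+ w. ennreal (V (y * Z w)) \<partial>M)" using assms(5) by simp
  also have "\<dots> \<le> (\<integral>\<^sup>+ w. ennreal (W w) + 1 \<partial>M)"
    by (intro nn_integral_mono) (metis W_def diff_add_cancel ennreal_1 ennreal_add_le)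
  also have "\<dots> = (\<integral>\<^sup>+ w. ennreal (W w) \<partial>M) + 1"
    by (subst nn_integral_add) (auto simp: emeasure_space_1)
  finally have W_inf: "(\<integral>\<^sup>+ w. ennreal (W w) \<partial>M) = \<infinity>" by (simp add: top_unique)
  obtain g where g_meas[measurable]: "g \<in> borel_measurable M" and g: "\<And>w. w \<in> space M \<Longrightarrow>
      0 < g w \<and> V (y * Z w) - 1 + y * Z w * g w / 2 \<le> U (g w)"
    using exists_measurable_near_maximizer[of "\<lambda>w. y * Z w" M] Z \<open>y > 0\<close> by auto
  obtain A b where A[measurable]: "A \<in> sets M"
    and A_bounds: "\<And>w. w \<in> A \<Longrightarrow> 0 \<le> W w \<and> W w \<le> b \<and> Z w * g w \<le> b"
    and A_large: "ennreal P < (\<integral>\<^sup>+ w. ennreal (W w * indicator A w) \<partial>M)"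
    using nn_integral_truncation_unbounded[OF W_meas _ W_inf, of "\<lambda>w. Z w * g w" P] Z by auto
  have A_space: "w \<in> A \<Longrightarrow> w \<in> space M" for w using sets.sets_into_space[OF A] by auto
  have W_nonneg: "0 \<le> W w * indicator A w" for w using A_bounds by (simp add: indicator_def)
  have "0 \<le> Z w * g w" if "w \<in> space M" for w
    using Z(2) g[OF that] that by (auto intro!: mult_nonneg_nonneg)
  then have "norm (W w * indicator A w) \<le> \<bar>b\<bar>" "norm (Z w * g w * indicator A w) \<le> \<bar>b\<bar>" for w
    using A_bounds[of w] A_space[of w] by (auto simp: indicator_def)
  then have W_int: "integrable M (\<lambda>w. W w * indicator A w)"
    and "integrable M (\<lambda>w. Z w * g w * indicator A w)"
    using Z(1) by (auto intro!: integrable_const_bound[OF AE_I2])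
  moreover have "P < (\<integral>w. W w * indicator A w \<partial>M)"
  proof -
    have "(\<integral>\<^sup>+ w. ennreal (W w * indicator A w) \<partial>M) = ennreal (\<integral>w. W w * indicator A w \<partial>M)"
      using W_int W_nonneg by (intro nn_integral_eq_integral) auto
    moreover have "0 \<le> (\<integral>w. W w * indicator A w \<partial>M)" using W_nonneg by simp
    ultimately show ?thesis using A_large by (cases "0 \<le> P") (auto simp: ennreal_less_iff)
  qed
  ultimately show ?thesis using that[OF g_meas A g] W_nonneg by (simp add: W_def)
qed

end

locale unbounded_utility = sublinear_utility +
  assumes unbounded: "\<not> bdd_above (U ` {0<..})"
begin

lemma exists_U_gt: "\<exists>x>0. B < U x"
  using unbounded by (meson bdd_above.I2 greaterThan_iff not_le_imp_less)

lemma exists_conj_subgradient_neg: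
  assumes "f > 0" shows "\<exists>e>0. - f \<in> subdiff_V U e"
proof -
  define \<phi> where "\<phi> = (\<lambda>\<eta>. V \<eta> + \<eta> * f)"
  \<comment> \<open>\<open>\<phi>\<close> exceeds \<open>\<phi> 1\<close> near \<open>0\<close> because \<open>U\<close> is unbounded and near \<open>\<infinity>\<close> because
    \<open>V \<eta> \<ge> U (f/2) - \<eta> f / 2\<close>, so it attains its infimum on a compact interval\<close>
  obtain x1 where x1: "x1 > 0" "\<phi> 1 + 1 < U x1" using exists_U_gt by blast
  define a where "a = min (1/2) (1 / (2 * x1))"
  define b where "b = max 1 (2 * (\<bar>\<phi> 1\<bar> + \<bar>U (f/2)\<bar> + 1) / f)"
  have a: "0 < a" "a \<le> 1" and b: "1 \<le> b" using x1 by (auto simp: a_def b_def)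
  have low: "\<phi> 1 < \<phi> z" if "0 < z" "z \<le> a" for z
  proof -
    have "x1 * z \<le> x1 * (1 / (2 * x1))" using that x1 by (intro mult_left_mono) (auto simp: a_def)
    then have "x1 * z \<le> 1/2" using x1 by simp
    moreover have "U x1 - x1 * z \<le> V z" using fenchel that x1 by simp
    moreover have "z * f \<ge> 0" using that assms by simp
    ultimately show ?thesis using x1 unfolding \<phi>_def by (simp add: algebra_simps)
  qed
  have high: "\<phi> 1 < \<phi> z" if "b \<le> z" for z
  proof -
    have "U (f/2) - z * f / 2 \<le> V z" using fenchel[of z "f/2"] that b assms by (simp add: mult.commute)
    moreover have "2 * (\<bar>\<phi> 1\<bar> + \<bar>U (f/2)\<bar> + 1) \<le> z * f"
      using that assms by (simp add: b_def divide_le_eq)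
    ultimately show ?thesis unfolding \<phi>_def by (simp add: algebra_simps abs_if split: if_splits)
  qed
  have "{a..b} \<subseteq> {0<..}" using a by auto
  then have "continuous_on {a..b} \<phi>" unfolding \<phi>_def
    by (intro continuous_on_add continuous_on_mult_right continuous_on_id
        continuous_on_subset[OF continuous_on_conj])
  moreover have "{a..b} \<noteq> {}" using a b by simp
  ultimately obtain e where e: "e \<in> {a..b}" "\<And>z. z \<in> {a..b} \<Longrightarrow> \<phi> e \<le> \<phi> z"
    using continuous_attains_inf[OF compact_Icc] by blast
  have "\<phi> e \<le> \<phi> z" if "z > 0" for z
  proof -
    have "\<phi> e \<le> \<phi> 1" using e a b by auto
    then show ?thesis
      using e(2)[of z] low[of z] high[of z] that by (cases "z < a"; cases "b \<le> z") auto
  qed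
  moreover have "e > 0" using e a by auto
  ultimately show ?thesis unfolding \<phi>_def subdiff_V_def by (force simp: algebra_simps)
qed

end

locale eae_bounded_utility = unbounded_utility +
  fixes C \<eta>0 :: real
  assumes C_ge_1: "C \<ge> 1" and eta0_pos: "\<eta>0 > 0"
    and conj_ge_1: "\<And>y. 0 < y \<Longrightarrow> y < \<eta>0 \<Longrightarrow> 1 \<le> conj_V U y"
    and elasticity_bound:
      "\<And>y q. 0 < y \<Longrightarrow> y < \<eta>0 \<Longrightarrow> q \<in> subdiff_V U y \<Longrightarrow> \<bar>q\<bar> * y \<le> C * conj_V U y"

lemma (in unbounded_utility) eae_bounded_utility_of_EAE:
  assumes "EAE U < \<infinity>" shows "\<exists>C \<eta>0. eae_bounded_utility U C \<eta>0"
proof -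
  obtain r where r: "EAE U < ereal r" using ereal_dense2[OF assms] by blast
  then obtain b where b: "b > 0"
    "\<And>y. y > 0 \<Longrightarrow> y < b \<Longrightarrow> (SUP q\<in>subdiff_V U y. ereal (\<bar>q\<bar> * y / V y)) < ereal r"
    using Limsup_lessD[OF r[unfolded EAE_def]] unfolding eventually_at_right_field by auto
  obtain x1 where x1: "x1 > 0" "2 < U x1" using exists_U_gt by blast
  define \<eta>0 where "\<eta>0 = min b (1 / x1)"
  have conj_ge_1: "1 \<le> V y" if "0 < y" "y < \<eta>0" for y
  proof -
    have "x1 * y < 1" using that x1 by (simp add: \<eta>0_def less_divide_eq mult.commute)
    moreover have "U x1 - x1 * y \<le> V y" using fenchel that x1 by simp
    ultimately show ?thesis using x1 by simp
  qed
  have "\<bar>q\<bar> * y \<le> max 1 r * V y" if "0 < y" "y < \<eta>0" "q \<in> subdiff_V U y" for y q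
  proof -
    have "ereal (\<bar>q\<bar> * y / V y) \<le> (SUP q\<in>subdiff_V U y. ereal (\<bar>q\<bar> * y / V y))"
      using that(3) by (rule SUP_upper)
    also have "\<dots> < ereal r" using b(2) that by (simp add: \<eta>0_def)
    finally have "\<bar>q\<bar> * y < r * V y"
      using conj_ge_1[OF that(1,2)] by (simp add: divide_less_eq)
    moreover have "r * V y \<le> max 1 r * V y"
      using conj_ge_1[OF that(1,2)] by (intro mult_right_mono) auto
    ultimately show ?thesis by simp
  qed
  moreover have "\<eta>0 > 0" using b x1 by (simp add: \<eta>0_def)
  ultimately have "eae_bounded_utility U (max 1 r) \<eta>0"
    using conj_ge_1 by unfold_locales auto
  then show ?thesis by blast
qed

context eae_bounded_utility
begin

lemma conj_doubling:
  assumes "0 < a" "a < \<eta>" "\<eta> < \<eta>0" "\<eta> \<le> a * (1 + 1 / (2 * C))"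
  shows "V a \<le> 2 * V \<eta>"
proof -
  obtain q where q: "q \<in> subdiff_V U a" using conj_subgradient_exists[OF assms(1)] by blast
  then have "V a + q * (\<eta> - a) \<le> V \<eta>" using assms by (auto simp: subdiff_V_def)
  moreover have "\<bar>q\<bar> * (\<eta> - a) \<le> V a / 2"
  proof -
    have "\<eta> - a \<le> a / (2 * C)" using assms(4) C_ge_1 by (simp add: algebra_simps)
    then have "\<bar>q\<bar> * (\<eta> - a) \<le> \<bar>q\<bar> * (a / (2 * C))" by (rule mult_left_mono) simp
    also have "\<dots> = \<bar>q\<bar> * a / (2 * C)" by simp
    also have "\<dots> \<le> C * V a / (2 * C)"
      using elasticity_bound[OF assms(1) _ q] assms C_ge_1 by (intro divide_right_mono) auto
    finally show ?thesis using C_ge_1 by simp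
  qed
  moreover have "- (\<bar>q\<bar> * (\<eta> - a)) \<le> q * (\<eta> - a)"
    using assms(2) mult_right_mono[of "- \<bar>q\<bar>" q "\<eta> - a"] by simp
  ultimately show ?thesis by linarith
qed

lemma conj_power_doubling:
  assumes "0 < \<eta>" "\<eta> < \<eta>0"
  shows "V (\<eta> / (1 + 1 / (2 * C)) ^ n) \<le> 2 ^ n * V \<eta>"
proof (induction n)
  case (Suc n)
  define r where "r = 1 + 1 / (2 * C)"
  have r: "r > 1" using C_ge_1 by (simp add: r_def)
  define b where "b = \<eta> / r ^ n"
  have b: "0 < b" "b \<le> \<eta>" using assms r by (auto simp: b_def divide_le_eq)
  have "V (b / r) \<le> 2 * V b"
    using b r assms by (intro conj_doubling[folded r_def]) (auto simp: divide_less_eq)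
  also have "\<dots> \<le> 2 * (2 ^ n * V \<eta>)" using Suc.IH by (simp add: b_def r_def)
  finally show ?case using r by (simp add: b_def r_def mult_ac)
qed simp

lemma conj_comparable:
  assumes "0 < y0" "y0 \<le> y"
  shows "\<exists>K>0. \<forall>z>0. y * z < \<eta>0 \<longrightarrow> V (y0 * z) \<le> K * V (y * z)"
proof -
  define r where "r = 1 + 1 / (2 * C)"
  have r: "r > 1" using C_ge_1 by (simp add: r_def)
  obtain n where n: "y / y0 < r ^ n" using real_arch_pow[OF r] by blast
  have "V (y0 * z) \<le> 2 ^ n * V (y * z)" if "z > 0" "y * z < \<eta>0" for z
  proof -
    have pos: "0 < y * z" using assms that by simp
    have "y * z \<le> (r ^ n * y0) * z"
      using n assms that by (intro mult_right_mono) (auto simp: divide_less_eq)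
    then have "y * z / r ^ n \<le> y0 * z" using r by (simp add: divide_le_eq algebra_simps)
    then have "V (y0 * z) \<le> V (y * z / r ^ n)" using pos r by (intro conj_antimono) auto
    also have "\<dots> \<le> 2 ^ n * V (y * z)" using conj_power_doubling[OF pos that(2)] by (simp add: r_def)
    finally show ?thesis .
  qed
  then show ?thesis by (intro exI[of _ "2 ^ n"]) auto
qed

lemma nn_integral_conj_infinite_mono:
  assumes "prob_space M" "Z \<in> borel_measurable M" "\<And>w. w \<in> space M \<Longrightarrow> 0 < Z w"
    and "0 < y0" "y0 \<le> y" "(\<integral>\<^sup>+ w. ennreal (V (y0 * Z w)) \<partial>M) = \<infinity>"
  shows "(\<integral>\<^sup>+ w. ennreal (V (y * Z w)) \<partial>M) = \<infinity>"
proof -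
  interpret prob_space M by fact
  obtain K where K: "K > 0" "\<And>z. z > 0 \<Longrightarrow> y * z < \<eta>0 \<Longrightarrow> V (y0 * z) \<le> K * V (y * z)"
    using conj_comparable[OF assms(4,5)] by blast
  define c where "c = \<bar>V (y0 * \<eta>0 / y)\<bar>"
  have "ennreal (V (y0 * Z w)) \<le> ennreal K * ennreal (V (y * Z w)) + ennreal c"
    if w: "w \<in> space M" for w
  proof (cases "y * Z w < \<eta>0")
    case True
    have "ennreal (V (y0 * Z w)) \<le> ennreal (K * V (y * Z w))"
      using K(2) assms(3)[OF w] True by (intro ennreal_leI) auto
    also have "\<dots> = ennreal K * ennreal (V (y * Z w))"
      using K conj_ge_1[of "y * Z w"] True assms(3)[OF w] assms(4,5) by (intro ennreal_mult) auto
    finally show ?thesis by (simp add: add_increasing2)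
  next
    case False
    then have "y0 * \<eta>0 / y \<le> y0 * Z w"
      using assms(4,5) by (simp add: divide_le_eq algebra_simps mult_left_mono)
    then have "V (y0 * Z w) \<le> c"
      unfolding c_def using assms(4,5) eta0_pos by (smt (verit) conj_antimono divide_pos_pos mult_pos_pos)
    then show ?thesis by (simp add: ennreal_leI add_increasing)
  qed
  then have "\<infinity> \<le> (\<integral>\<^sup>+ w. ennreal K * ennreal (V (y * Z w)) + ennreal c \<partial>M)"
    using nn_integral_mono[of M "\<lambda>w. ennreal (V (y0 * Z w))"] assms(6) by simp
  also have "\<dots> = ennreal K * (\<integral>\<^sup>+ w. ennreal (V (y * Z w)) \<partial>M) + ennreal c"
    using borel_measurable_conj[of "\<lambda>w. y * Z w" M] assms
    by (simp add: nn_integral_add nn_integral_cmult emeasure_space_1)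
  finally show ?thesis by (simp add: top_unique ennreal_mult_eq_top_iff)
qed

lemma biconj_le_U_eventually: "\<exists>F0. \<forall>f\<ge>F0. \<exists>\<eta>>0. V \<eta> + \<eta> * f \<le> (1 + C) * U f"
proof (rule exI, intro allI impI)
  fix f assume f: "max 1 (2 * (V (\<eta>0/2) - U 1 + \<eta>0) / \<eta>0) + 1 \<le> f"
  then have "f > 0" by simp
  \<comment> \<open>the minimizer \<open>e\<close> of \<open>\<eta> \<mapsto> V \<eta> + \<eta> f\<close> lies below \<open>\<eta>0\<close> once \<open>f\<close> is large,
    so the elasticity bound applies to its subgradient \<open>- f\<close>\<close>
  obtain e where e: "e > 0" "- f \<in> subdiff_V U e"
    using exists_conj_subgradient_neg[OF \<open>f > 0\<close>] by blast
  have min: "V e + e * f \<le> V z + z * f" if "z > 0" for z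
    using e(2) that by (auto simp: subdiff_V_def algebra_simps)
  have "e < \<eta>0"
  proof (rule ccontr)
    assume "\<not> e < \<eta>0"
    then have "\<eta>0 * (f - 1) \<le> e * (f - 1)" using f by (intro mult_right_mono) auto
    moreover have "U 1 - e \<le> V e" using fenchel[of e 1] e by simp
    moreover have "V e + e * f \<le> V (\<eta>0/2) + \<eta>0/2 * f" using min[of "\<eta>0/2"] eta0_pos by simp
    ultimately have "\<eta>0 * f \<le> 2 * (V (\<eta>0/2) - U 1 + \<eta>0)" by (simp add: algebra_simps)
    then have "f \<le> 2 * (V (\<eta>0/2) - U 1 + \<eta>0) / \<eta>0"
      using eta0_pos by (simp add: le_divide_eq mult.commute)
    then show False using f by simp
  qed
  then have "e * f \<le> C * V e" using elasticity_bound[OF e(1) _ e(2)] \<open>f > 0\<close> by (simp add: mult.commute)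
  moreover have "C * V e \<le> C * U f"
    using conj_le_U_of_subgradient[OF \<open>f > 0\<close> e] C_ge_1 by (intro mult_left_mono) auto
  moreover have "V e \<le> U f" using conj_le_U_of_subgradient[OF \<open>f > 0\<close> e] .
  ultimately have "V e + e * f \<le> (1 + C) * U f" by (simp add: algebra_simps)
  then show "\<exists>\<eta>>0. V \<eta> + \<eta> * f \<le> (1 + C) * U f" using e(1) by blast
qed

lemma U_mixture_lower_bound:
  assumes "c > 0"
  shows "\<exists>K. \<forall>g>0. \<forall>t. 0 \<le> t \<longrightarrow> t \<le> 1 \<longrightarrow> t * U g \<le> (1 + C) * (U (c + t * g) + K)"
proof -
  obtain F0 where F0: "\<And>f. F0 \<le> f \<Longrightarrow> \<exists>\<eta>>0. V \<eta> + \<eta> * f \<le> (1 + C) * U f"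
    using biconj_le_U_eventually by blast
  define K where "K = 2 * \<bar>U c\<bar> + \<bar>V 1\<bar> + \<bar>F0\<bar>"
  have "t * U g \<le> (1 + C) * (U (c + t * g) + K)" if "g > 0" "0 \<le> t" "t \<le> 1" for g t
  proof -
    define f where "f = c + t * g"
    have "c \<le> f" using that by (simp add: f_def)
    then have Uf: "U c \<le> U f" using U_mono assms by blast
    \<comment> \<open>Fenchel's inequality at \<open>g\<close> and at \<open>c\<close>, averaged with weights \<open>t\<close> and \<open>1 - t\<close>\<close>
    have fenchel_mix: "t * U g \<le> V \<eta> + \<eta> * f + \<bar>U c\<bar>" if "\<eta> > 0" for \<eta>
    proof -
      have "t * U g \<le> t * (V \<eta> + \<eta> * g)" using U_le_conj[OF that \<open>g > 0\<close>] \<open>0 \<le> t\<close>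
        by (rule mult_left_mono)
      moreover have "(1 - t) * U c \<le> (1 - t) * (V \<eta> + \<eta> * c)"
        using U_le_conj[OF that assms] \<open>t \<le> 1\<close> by (intro mult_left_mono) auto
      moreover have "- \<bar>U c\<bar> \<le> (1 - t) * U c"
      proof -
        have "- \<bar>U c\<bar> \<le> (1 - t) * (- \<bar>U c\<bar>)"
          using mult_right_mono[of "1 - t" 1 "\<bar>U c\<bar>"] \<open>0 \<le> t\<close> by simp
        also have "\<dots> \<le> (1 - t) * U c" using \<open>t \<le> 1\<close> by (intro mult_left_mono) auto
        finally show ?thesis .
      qed
      moreover have "\<eta> * t * c \<ge> 0" using that \<open>0 \<le> t\<close> assms by simp
      moreover have "t * (V \<eta> + \<eta> * g) + (1 - t) * (V \<eta> + \<eta> * c) = V \<eta> + \<eta> * f - \<eta> * t * c"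
        unfolding f_def by algebra
      ultimately show ?thesis by linarith
    qed
    show ?thesis
    proof (cases "F0 \<le> f")
      case True
      then obtain \<eta> where "\<eta> > 0" "V \<eta> + \<eta> * f \<le> (1 + C) * U f" using F0 by blast
      then have "t * U g \<le> (1 + C) * U f + \<bar>U c\<bar>" using fenchel_mix by fastforce
      also have "\<dots> \<le> (1 + C) * (U f + K)" using C_ge_1 by (simp add: K_def algebra_simps)
      finally show ?thesis by (simp add: f_def)
    next
      case False
      then have "t * U g \<le> \<bar>V 1\<bar> + \<bar>F0\<bar> + \<bar>U c\<bar>" using fenchel_mix[of 1] by simp
      also have "\<dots> \<le> U f + K" using Uf by (simp add: K_def)
      also have "\<dots> \<le> (1 + C) * (U f + K)"
        using Uf C_ge_1 by (simp add: K_def mult_le_cancel_right1)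
      finally show ?thesis by (simp add: f_def)
    qed
  qed
  then show ?thesis by blast
qed

lemma value_fun_infinite:
  assumes M: "prob_space M" and Z: "Z \<in> borel_measurable M" "\<forall>w\<in>space M. 0 < Z w"
    "integrable M Z" "(\<integral>w. Z w \<partial>M) = 1"
    and "x > 0" "0 < y0" "(\<integral>\<^sup>+ w. ennreal (V (y0 * Z w)) \<partial>M) = \<infinity>"
  shows "value_fun M Z x U = \<infinity>"
proof (rule ereal_top)
  fix m :: real
  interpret prob_space M by (rule M)
  \<comment> \<open>spend half of \<open>x\<close> on the constant \<open>c\<close>, which keeps \<open>U\<close> bounded below,
    and the other half on near-maximizers on a set where \<open>V (y Z) - 1\<close> has large integral\<close>
  define c where "c = x / 2"
  have c: "c > 0" using \<open>x > 0\<close> by (simp add: c_def)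
  obtain K where K: "\<And>g t. g > 0 \<Longrightarrow> 0 \<le> t \<Longrightarrow> t \<le> 1 \<Longrightarrow> t * U g \<le> (1 + C) * (U (c + t * g) + K)"
    using U_mixture_lower_bound[OF c] by blast
  define D where "D = \<bar>K\<bar> + \<bar>U c\<bar>"
  define P where "P = (1 + C) * max (m + 2 * D) 0"
  define y where "y = max y0 (4 * P / x)"
  have C: "1 + C > 0" using C_ge_1 by simp
  have "0 \<le> P" using C by (simp add: P_def)
  have y: "0 < y" "y0 \<le> y" "4 * P / x \<le> y" using \<open>0 < y0\<close> by (auto simp: y_def)
  have "(\<integral>\<^sup>+ w. ennreal (V (y * Z w)) \<partial>M) = \<infinity>"
    using nn_integral_conj_infinite_mono[OF M Z(1) _ \<open>0 < y0\<close> y(2)] assms(8) Z(2) by simp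
  then obtain g A where [measurable]: "g \<in> borel_measurable M" "A \<in> sets M"
    and g: "\<And>w. w \<in> space M \<Longrightarrow> 0 < g w \<and> V (y * Z w) - 1 + y * Z w * g w / 2 \<le> U (g w)"
    and Wa_nonneg: "\<And>w. 0 \<le> (V (y * Z w) - 1) * indicator A w"
    and Wa_int: "integrable M (\<lambda>w. (V (y * Z w) - 1) * indicator A w)"
    and Ga_int: "integrable M (\<lambda>w. Z w * g w * indicator A w)"
    and Wa_large: "P < (\<integral>w. (V (y * Z w) - 1) * indicator A w \<partial>M)"
    using exists_truncated_near_maximizer[OF M Z(1,2) y(1), where P = P] by blast
  define Wa where "Wa = (\<lambda>w. (V (y * Z w) - 1) * indicator A w)"
  define Ga where "Ga = (\<lambda>w. Z w * g w * indicator A w)"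
  have Wa: "integrable M Wa" "\<And>w. 0 \<le> Wa w" using Wa_int Wa_nonneg by (simp_all add: Wa_def)
  have "0 \<le> Ga w" if "w \<in> space M" for w
    using Z(2) g[OF that] that by (auto simp: Ga_def indicator_def intro!: mult_nonneg_nonneg)
  with Ga_int have Ga: "integrable M Ga" "\<And>w. w \<in> space M \<Longrightarrow> 0 \<le> Ga w"
    by (simp_all add: Ga_def)
  have "P < (\<integral>w. Wa w \<partial>M)" using Wa_large by (simp add: Wa_def)
  moreover have "0 \<le> (\<integral>w. Ga w \<partial>M)" using Ga by (simp add: integral_nonneg_AE)
  ultimately obtain t where t: "0 \<le> t" "t \<le> 1" "t * (\<integral>w. Ga w \<partial>M) \<le> x / 2"
    "P \<le> t * ((\<integral>w. Wa w \<partial>M) + y * (\<integral>w. Ga w \<partial>M) / 2)"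
    using exists_mixing_weight[OF \<open>x > 0\<close> \<open>0 \<le> P\<close> _ _ y(3)] by blast
  define f where "f = (\<lambda>w. c + t * (g w * indicator A w))"
  have f_ge: "c \<le> f w" if "w \<in> space M" for w
    using t g[OF that] by (simp add: f_def indicator_def)
  have f_meas: "f \<in> borel_measurable M" unfolding f_def by measurable
  have "f \<in> budget_set M Z x"
    unfolding f_def using c t g Ga(1) by (intro budget_set_mixture[OF M Z]) (auto simp: Ga_def c_def less_imp_le)
  define \<psi> where "\<psi> w = t * (Wa w + y * Ga w / 2) / (1 + C)" for w
  have \<psi>_bound: "\<psi> w \<le> U (f w) + D" if w: "w \<in> space M" for w
  proof (cases "w \<in> A")
    case True
    have "t * (Wa w + y * Ga w / 2) \<le> t * U (g w)"
      using g[OF w] True t by (intro mult_left_mono) (auto simp: Wa_def Ga_def algebra_simps)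
    also have "\<dots> \<le> (1 + C) * (U (f w) + K)" using K g[OF w] t True by (simp add: f_def)
    finally have "\<psi> w \<le> U (f w) + K" using C by (simp add: \<psi>_def divide_le_eq mult.commute)
    then show ?thesis by (simp add: D_def)
  next
    case False
    then show ?thesis by (simp add: \<psi>_def Wa_def Ga_def f_def D_def)
  qed
  have "ereal ((\<integral>w. \<psi> w \<partial>M) - 2 * D) \<le> expected_utility M U f"
  proof (rule expected_utility_ge_integral[OF M])
    show "integrable M \<psi>" unfolding \<psi>_def using Wa Ga by auto
    show "(\<lambda>w. U (f w)) \<in> borel_measurable M" using borel_measurable_U_comp[OF f_meas c f_ge] .
    show "\<And>w. w \<in> space M \<Longrightarrow> 0 \<le> \<psi> w" using Wa Ga t y C by (simp add: \<psi>_def)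
  qed (use \<psi>_bound f_ge c in \<open>auto simp: D_def Uext_def dest: less_le_trans[OF c]\<close>)
  moreover have "m + 2 * D \<le> (\<integral>w. \<psi> w \<partial>M)"
  proof -
    have "(1 + C) * (m + 2 * D) \<le> P" unfolding P_def using C by (intro mult_left_mono) auto
    also have "\<dots> \<le> t * ((\<integral>w. Wa w \<partial>M) + y * (\<integral>w. Ga w \<partial>M) / 2)" by (rule t(4))
    finally show ?thesis using Wa Ga C by (simp add: \<psi>_def le_divide_eq mult.commute)
  qed
  ultimately have "ereal m \<le> expected_utility M U f"
    by (meson ereal_less_eq(3) le_diff_eq order_trans)
  then show "ereal m \<le> value_fun M Z x U"
    unfolding value_fun_def using \<open>f \<in> budget_set M Z x\<close> by (intro SUP_upper2) auto
qed

end

lemma sublinear_utility_of_is_utility: "is_utility U \<Longrightarrow> sublinear_utility U"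
  unfolding is_utility_def sublinear_utility_def by blast

theorem lemma3p2:
  fixes M :: "'a measure" and ZT :: "'a \<Rightarrow> real" and U :: "real \<Rightarrow> real"
  assumes "prob_space M"
    and "ZT \<in> borel_measurable M"
    and "\<forall>w\<in>space M. 0 < ZT w"
    and "integrable M ZT"
    and "(\<integral>w. ZT w \<partial>M) = 1"
    and "is_utility U"
    and "EAE U < \<infinity>"
  shows "(\<forall>y>0. (\<integral>\<^sup>+ w. ennreal (conj_V U (y * ZT w)) \<partial>M) < \<infinity>)
         \<longleftrightarrow> (\<exists>x>0. value_fun M ZT x U < \<infinity>)"
proof
  interpret sublinear_utility U using assms(6) by (rule sublinear_utility_of_is_utility)
  assume "\<forall>y>0. (\<integral>\<^sup>+ w. ennreal (conj_V U (y * ZT w)) \<partial>M) < \<infinity>"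
  from this[rule_format, of 1]
  have "(\<integral>\<^sup>+ w. ennreal (conj_V U (ZT w)) \<partial>M) < \<infinity>" by simp
  then have "value_fun M ZT 1 U < \<infinity>" by (rule value_fun_finite[OF assms(2,3)])
  then show "\<exists>x>0. value_fun M ZT x U < \<infinity>" using zero_less_one by blast
next
  interpret sublinear_utility U using assms(6) by (rule sublinear_utility_of_is_utility)
  assume "\<exists>x>0. value_fun M ZT x U < \<infinity>"
  then obtain x where x: "x > 0" "value_fun M ZT x U < \<infinity>" by blast
  show "\<forall>y>0. (\<integral>\<^sup>+ w. ennreal (conj_V U (y * ZT w)) \<partial>M) < \<infinity>"
  proof (cases "bdd_above (U ` {0<..})")
    case True
    then show ?thesis using nn_integral_conj_finite_of_bdd_above[OF assms(1)] assms(3) by simp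
  next
    case False
    then interpret unbounded_utility U by unfold_locales
    obtain C \<eta>0 where eae: "eae_bounded_utility U C \<eta>0"
      using eae_bounded_utility_of_EAE[OF assms(7)] by blast
    show ?thesis
    proof (rule ccontr)
      assume "\<not> ?thesis"
      then obtain y0 where "0 < y0" "(\<integral>\<^sup>+ w. ennreal (conj_V U (y0 * ZT w)) \<partial>M) = \<infinity>"
        using top.not_eq_extremum by auto
      then have "value_fun M ZT x U = \<infinity>"
        by (rule eae_bounded_utility.value_fun_infinite[OF eae assms(1-5) x(1)])
      then show False using x(2) by simp
    qed
  qed
qed

end
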